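(* Let $n\ge 1$, let $C_u(v_1),\ldots,C_u(v_n)>0$, $C_d(v_1),\ldots,C_d(v_n)>0$ and $R_1,\ldots,R_n>0$ be sustainable, i.e. $R_i\le C_u(v_i)$ for all $i$, $\sum_{j\ne i}R_j\le C_d(v_i)$ for all $i$, and $(n-1)\sum_{i=1}^n R_i\le\sum_{i=1}^n C_u(v_i)$. Then the output $r_{i,j}$ of the algorithm described in the context satisfies the Downlink Capacity Constraint: for every $1\le k\le n$, $$\sum_{i\neq k}\sum_{j=1}^n r_{i,j} \leq C_d(v_k),$$ i.e. the aggregate rate of all sub-streams received by $v_k$ under the two-level broadcast trees described in the context is at most $C_d(v_k)$.
   Context: Sub-stream rate assigning algorithm. Input: $n$, uplink capacities $C_u(v_1),\ldots,C_u(v_n)$ and rates $R_1,\ldots,R_n$. Initialize $r_{i,j}:=0$ for all $1\le i,j\le n$ and $U_i := C_u(v_i)-R_i$ for $1\le i\le n$. Outer loop: for $i=1$ to $n$: set $R'_i := R_i$; inner loop: for $j=1$ to $n$: if $(n-2)R'_i > U_j$ then set $r_{i,j} := U_j/(n-2)$, else set $r_{i,j} := R'_i$; then set $U_j := U_j-(n-2)r_{i,j}$ and $R'_i := R'_i - r_{i,j}$; if $R'_i = 0$, exit the inner loop. Output all $r_{i,j}$. Interpretation: $r_{i,j}$ is the rate of sub-stream $s_{i,j}$ of site $v_i$'s data stream. Sub-stream $s_{i,i}$ is sent by $v_i$ directly to all other sites; for $j\ne i$, $s_{i,j}$ is sent from $v_i$ to $v_j$ and $v_j$ forwards it to the remaining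 $n-2$ sites. Thus every site other than $v_i$ receives each sub-stream $s_{i,j}$ exactly once, consuming $r_{i,j}$ of its downlink, and a site does not use its downlink for its own sub-streams. *)

theory Defs
  imports Main "HOL.Real"
begin

text \<open>Sites are indexed 1..n.
  The state consists of the residual uplink capacities U (indexed by j) and the
  rate matrix r (r i j = rate of sub-stream s_{i,j}).\<close>

text \<open>Inner loop for the fixed outer index i, processing j, j+1, ..., n.
  Rp is the current value of R'_i.  The exit test R'_i = 0 is performed after
  the body of each iteration, as in the algorithm.\<close>
function inner_loop ::
  "nat \<Rightarrow> nat \<Rightarrow> nat \<Rightarrow> real \<Rightarrow> (nat \<Rightarrow> real) \<Rightarrow> (nat \<Rightarrow> nat \<Rightarrow> real)
    \<Rightarrow> (nat \<Rightarrow> real) \<times> (nat \<Rightarrow> nat \<Rightarrow> real)" where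
  "inner_loop n i j Rp U r =
    (if n < j then (U, r)
     else
       (let rij = (if (real n - 2) * Rp > U j then U j / (real n - 2) else Rp);
            U' = U(j := U j - (real n - 2) * rij);
            Rp' = Rp - rij;
            r' = r(i := (r i)(j := rij))
        in if Rp' = 0 then (U', r') else inner_loop n i (Suc j) Rp' U' r'))"
  by pat_completeness auto
termination
  by (relation "measure (\<lambda>(n, i, j, _, _, _). Suc n - j)") auto

function outer_loop ::
  "nat \<Rightarrow> (nat \<Rightarrow> real) \<Rightarrow> nat \<Rightarrow> (nat \<Rightarrow> real) \<Rightarrow> (nat \<Rightarrow> nat \<Rightarrow> real)
    \<Rightarrow> nat \<Rightarrow> nat \<Rightarrow> real" where
  "outer_loop n R i U r =
    (if n < i then r
     else (case inner_loop n i 1 (R i) U r of (U', r') \<Rightarrow> outer_loop n R (Suc i) U' r'))"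
  by pat_completeness auto
termination
  by (relation "measure (\<lambda>(n, R, i, _, _). Suc n - i)") auto

definition sub_stream_rates :: "nat \<Rightarrow> (nat \<Rightarrow> real) \<Rightarrow> (nat \<Rightarrow> real) \<Rightarrow> nat \<Rightarrow> nat \<Rightarrow> real" where
  "sub_stream_rates n Cu R = outer_loop n R 1 (\<lambda>j. Cu j - R j) (\<lambda>i j. 0)"

end

theory Submission
  imports Defs
begin

text \<open>Site v_k receives every sub-stream of every other site exactly once, so its downlink load is
  the sum over i \<noteq> k of the total rate assigned to stream i. The algorithm splits R_i into pieces
  r_{i,j} with r_{i,j} \<le> R'_i, so the residual R'_i never becomes negative and the pieces of
  stream i add up to at most R_i. Hence the load on v_k is at most \<Sum>_{i \<noteq> k} R_i \<le> C_d(v_k).\<close>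

lemma sum_fun_upd:
  assumes "finite A" "j \<in> A"
  shows "sum (f(j := x)) A = sum f A - f j + (x :: 'b :: ab_group_add)"
  using assms by (simp add: sum.remove algebra_simps)

text \<open>For n = 2 the first branch is u / 0 = 0; for n = 1 the claim fails, as n - 2 < 0.\<close>
lemma sub_stream_rate_le:
  assumes "2 \<le> n" "0 \<le> Rp"
  shows "(if (real n - 2) * Rp > u then u / (real n - 2) else Rp) \<le> Rp"
proof (cases "n = 2")
  case False
  with assms(1) have "real n - 2 > 0" by simp
  then show ?thesis by (simp add: pos_divide_le_eq mult.commute)
qed (use assms in simp)

lemma inner_loop_other_row:
  assumes "inner_loop n i j Rp U r = (U', r')" "i' \<noteq> i"
  shows "r' i' = r i'"
  using assms
proof (induction n i j Rp U r arbitrary: U' r' rule: inner_loop.induct)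
  case (1 n i j Rp U r)
  show ?case
  proof (cases "n < j")
    case True
    with "1.prems" show ?thesis by (simp add: inner_loop.simps)
  next
    case False
    define rij where "rij = (if (real n - 2) * Rp > U j then U j / (real n - 2) else Rp)"
    define U2 where "U2 = U(j := U j - (real n - 2) * rij)"
    define r2 where "r2 = r(i := (r i)(j := rij))"
    have step: "inner_loop n i j Rp U r =
        (if Rp - rij = 0 then (U2, r2) else inner_loop n i (Suc j) (Rp - rij) U2 r2)"
      using False by (subst inner_loop.simps) (simp add: Let_def rij_def U2_def r2_def)
    have "r2 i' = r i'" using "1.prems"(2) by (simp add: r2_def)
    with step "1.prems" "1.IH"[OF False rij_def U2_def refl r2_def] show ?thesis
      by (auto split: if_splits)
  qed
qed

lemma inner_loop_row_sum_le:
  assumes "inner_loop n i j Rp U r = (U', r')" "2 \<le> n" "1 \<le> j" "0 \<le> Rp"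
    and "\<forall>j'\<ge>j. r i j' = 0"
  shows "(\<Sum>j'=1..n. r' i j') \<le> (\<Sum>j'=1..n. r i j') + Rp"
  using assms
proof (induction n i j Rp U r arbitrary: U' r' rule: inner_loop.induct)
  case (1 n i j Rp U r)
  show ?case
  proof (cases "n < j")
    case True
    with "1.prems" show ?thesis by (simp add: inner_loop.simps)
  next
    case False
    define rij where "rij = (if (real n - 2) * Rp > U j then U j / (real n - 2) else Rp)"
    define U2 where "U2 = U(j := U j - (real n - 2) * rij)"
    define r2 where "r2 = r(i := (r i)(j := rij))"
    have step: "inner_loop n i j Rp U r =
        (if Rp - rij = 0 then (U2, r2) else inner_loop n i (Suc j) (Rp - rij) U2 r2)"
      using False by (subst inner_loop.simps) (simp add: Let_def rij_def U2_def r2_def)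
    have rij_le: "rij \<le> Rp"
      unfolding rij_def using sub_stream_rate_le "1.prems" by blast
    have row2: "(\<Sum>j'=1..n. r2 i j') = (\<Sum>j'=1..n. r i j') + rij"
      using sum_fun_upd[of "{1..n}" j "r i" rij] False "1.prems"(3,5) by (simp add: r2_def)
    show ?thesis
    proof (cases "Rp - rij = 0")
      case True
      with step "1.prems"(1) row2 rij_le show ?thesis by auto
    next
      case nonzero: False
      have "inner_loop n i (Suc j) (Rp - rij) U2 r2 = (U', r')"
        using step nonzero "1.prems"(1) by simp
      moreover have "\<forall>j'\<ge>Suc j. r2 i j' = 0" using "1.prems"(5) by (simp add: r2_def)
      ultimately have "(\<Sum>j'=1..n. r' i j') \<le> (\<Sum>j'=1..n. r2 i j') + (Rp - rij)"
        using "1.IH"[OF False rij_def U2_def refl r2_def nonzero] "1.prems"(2) rij_le by simp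
      with row2 show ?thesis by simp
    qed
  qed
qed

lemma outer_loop_done_row:
  "i' < i \<Longrightarrow> outer_loop n R i U r i' = r i'"
proof (induction n R i U r rule: outer_loop.induct)
  case (1 n R i U r)
  show ?case
  proof (cases "n < i")
    case True
    then show ?thesis by (simp add: outer_loop.simps)
  next
    case False
    obtain U' r' where inner: "inner_loop n i 1 (R i) U r = (U', r')" by fastforce
    have "outer_loop n R i U r i' = outer_loop n R (Suc i) U' r' i'"
      using False inner by (subst outer_loop.simps) simp
    also have "\<dots> = r' i'" using "1.IH"[OF False inner[symmetric]] "1.prems" by simp
    also have "\<dots> = r i'" using inner_loop_other_row[OF inner] "1.prems" by simp
    finally show ?thesis .
  qed
qed

lemma outer_loop_row_sum_le:
  assumes "2 \<le> n" "i \<le> i'" "i' \<le> n" "\<forall>i''\<in>{i..n}. 0 \<le> R i''"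
    and "\<forall>i''\<ge>i. \<forall>j. r i'' j = 0"
  shows "(\<Sum>j=1..n. outer_loop n R i U r i' j) \<le> R i'"
  using assms
proof (induction n R i U r rule: outer_loop.induct)
  case (1 n R i U r)
  obtain U' r' where inner: "inner_loop n i 1 (R i) U r = (U', r')" by fastforce
  have step: "outer_loop n R i U r = outer_loop n R (Suc i) U' r'"
    using "1.prems" inner by (subst outer_loop.simps) simp
  show ?case
  proof (cases "i' = i")
    case True
    have "(\<Sum>j=1..n. r' i j) \<le> (\<Sum>j=1..n. r i j) + R i"
      using inner_loop_row_sum_le[OF inner] "1.prems" by auto
    moreover have "outer_loop n R (Suc i) U' r' i = r' i" by (rule outer_loop_done_row) simp
    ultimately show ?thesis using step True "1.prems" by simp
  next
    case False
    have "\<forall>i''\<ge>Suc i. \<forall>j. r' i'' j = 0"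
      using inner_loop_other_row[OF inner] "1.prems"(5) by auto
    with "1.IH"[OF _ inner[symmetric]] "1.prems" False step show ?thesis by auto
  qed
qed

theorem propositionB6:
  fixes n :: nat and Cu Cd R :: "nat \<Rightarrow> real"
  assumes "n \<ge> 1"
    and "\<forall>i\<in>{1..n}. Cu i > 0"
    and "\<forall>i\<in>{1..n}. Cd i > 0"
    and "\<forall>i\<in>{1..n}. R i > 0"
    and "\<forall>i\<in>{1..n}. R i \<le> Cu i"
    and "\<forall>i\<in>{1..n}. (\<Sum>j\<in>{1..n} - {i}. R j) \<le> Cd i"
    and "(real n - 1) * (\<Sum>i=1..n. R i) \<le> (\<Sum>i=1..n. Cu i)"
  shows "\<forall>k\<in>{1..n}. (\<Sum>i\<in>{1..n} - {k}. \<Sum>j=1..n. sub_stream_rates n Cu R i j) \<le> Cd k"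
proof
  fix k assume k: "k \<in> {1..n}"
  show "(\<Sum>i\<in>{1..n} - {k}. \<Sum>j=1..n. sub_stream_rates n Cu R i j) \<le> Cd k"
  proof (cases "n = 1")
    case True
    with k assms(3) show ?thesis by simp
  next
    case False
    with assms(1) have "2 \<le> n" by simp
    then have "(\<Sum>i\<in>{1..n} - {k}. \<Sum>j=1..n. sub_stream_rates n Cu R i j) \<le> (\<Sum>i\<in>{1..n} - {k}. R i)"
      unfolding sub_stream_rates_def
      using assms(4) by (intro sum_mono outer_loop_row_sum_le) (auto simp: less_imp_le)
    also have "\<dots> \<le> Cd k" using assms(6) k by blast
    finally show ?thesis .
  qed
qed

end
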